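(* Let $X=\{1,\dots,n\}$, $Y$ finite, $Q$ a symmetric irreducible stochastic matrix on $Y$ (notation in context). Let $0\le k\le h\le n-1$ and let $\underline a=(a_0,\dots,a_m)$ be a type with $a_0+\cdots+a_m=h+1$ and $\ell(\underline a)\le k$; put $\underline a'=(a_0-1,a_1,\dots,a_m)$. Then every $F\in P_{h,\underline a',k}$ satisfies $$D_{h+1,\underline a}D^*_{h+1,\underline a}F=|Y|\,(n+\ell(\underline a)-k-h)(h-k+1)\,F.$$
   Context: $Q$ acts on $L(Y)$ by $(Qf)(y)=\sum_{y'}q(y,y')f(y')$, with distinct eigenvalues $\lambda_0=1,\dots,\lambda_m$ and eigenspaces $W_0$ (constants), $W_1,\dots,W_m$. For $0\le k\le n$, $\Theta_k$ is the set of functions $\theta$ with $\mathrm{dom}(\theta)$ a $k$-subset of $X$ and values in $Y$ ($\Theta_0$ consists of the empty function); $\varphi\subseteq\theta$ means $\mathrm{dom}\varphi\subseteq\mathrm{dom}\theta$ and $\theta|_{\mathrm{dom}\varphi}=\varphi$. For $1\le k\le n$: $D_k:L(\Theta_k)\to L(\Theta_{k-1})$, $(D_kF)(\varphi)=\sum_{\theta\in\Theta_k:\theta\supseteq\varphi}F(\theta)$, and $D_k^*:L(\Theta_{k-1})\to L(\Theta_k)$, $(D_k^*F)(\theta)=\sum_{\varphi\subseteq\theta}F(\varphi)$; $D_0:=0$. Types $\underline b=(b_0,\dots,b_m)$ of nonnegative integers, $|\underline b|=\sum b_i$, $\ell(\underline b)=b_1+\cdots+b_m$, $\underline b'=(b_0-1,b_1,\dots,b_m)$.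 A fundamental function of type $\underline b$ on a set $A$ with $|A|=|\underline b|$ is $F=\bigotimes_{j\in A}F^j$ ($F(\theta)=\prod_{j\in A}F^j(\theta(j))$ on $Y^A$, $0$ elsewhere) with each $F^j$ in some $W_{i_j}$ and exactly $b_i$ indices with $i_j=i$; $P_{k,\underline b,A}$ is their span and $P_{k,\underline b}=\bigoplus_{|A|=k}P_{k,\underline b,A}$ (so $P_{0,(0,\dots,0)}=L(\Theta_0)$; $\{0\}$ if an entry is negative). $D_{k,\underline b}$ is $D_k$ restricted to $P_{k,\underline b}$ and $D^*_{k,\underline b}$ is $D^*_k$ restricted to $P_{k-1,\underline b'}$. Spaces $P_{h,\underline b,k}$: for a type $\underline b$ with $|\underline b|=k$, $P_{k,\underline b,k}=\ker D_{k,\underline b}$; for $k<h\le n$ and $|\underline b|=h$ with $\ell(\underline b)\le k$, $P_{h,\underline b,k}=D^*_{h,\underline b}(P_{h-1,\underline b',k})$. *)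

theory Defs
  imports Complex_Main
begin

text \<open>The state space Y is the finite type 'y (Y = UNIV); the matrix Q is q :: 'y => 'y => real.\<close>

definition Qop :: "('y::finite \<Rightarrow> 'y \<Rightarrow> real) \<Rightarrow> ('y \<Rightarrow> real) \<Rightarrow> ('y \<Rightarrow> real)" where
  "Qop q f = (\<lambda>y. \<Sum>y'\<in>UNIV. q y y' * f y')"

definition symmetric_matrix :: "('y \<Rightarrow> 'y \<Rightarrow> real) \<Rightarrow> bool" where
  "symmetric_matrix q \<longleftrightarrow> (\<forall>y y'. q y y' = q y' y)"

definition stochastic_matrix :: "('y::finite \<Rightarrow> 'y \<Rightarrow> real) \<Rightarrow> bool" where
  "stochastic_matrix q \<longleftrightarrow> (\<forall>y y'. 0 \<le> q y y') \<and> (\<forall>y. (\<Sum>y'\<in>UNIV. q y y') = 1)"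

definition irreducible_matrix :: "('y \<Rightarrow> 'y \<Rightarrow> real) \<Rightarrow> bool" where
  "irreducible_matrix q \<longleftrightarrow> (\<forall>y y'. (y, y') \<in> {(a, b). 0 < q a b}\<^sup>*)"

definition is_eigenvalue :: "('y::finite \<Rightarrow> 'y \<Rightarrow> real) \<Rightarrow> real \<Rightarrow> bool" where
  "is_eigenvalue q \<mu> \<longleftrightarrow> (\<exists>f. f \<noteq> (\<lambda>_. 0) \<and> Qop q f = (\<lambda>y. \<mu> * f y))"

definition eigenspace :: "('y::finite \<Rightarrow> 'y \<Rightarrow> real) \<Rightarrow> real \<Rightarrow> ('y \<Rightarrow> real) set" where
  "eigenspace q \<mu> = {f. Qop q f = (\<lambda>y. \<mu> * f y)}"

definition Theta :: "nat \<Rightarrow> nat \<Rightarrow> (nat \<rightharpoonup> 'y) set" where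
  "Theta n k = {\<theta>. dom \<theta> \<subseteq> {1..n} \<and> card (dom \<theta>) = k}"

text \<open>D_k : L(Theta_k) -> L(Theta_(k-1)), with D_0 = 0; functions are extended by 0 outside Theta.\<close>
definition Dop :: "nat \<Rightarrow> nat \<Rightarrow> ((nat \<rightharpoonup> 'y) \<Rightarrow> real) \<Rightarrow> ((nat \<rightharpoonup> 'y) \<Rightarrow> real)" where
  "Dop n k F = (\<lambda>\<phi>. if k = 0 then 0
      else if \<phi> \<in> Theta n (k - 1) then (\<Sum>\<theta>\<in>{\<theta>\<in>Theta n k. \<phi> \<subseteq>\<^sub>m \<theta>}. F \<theta>) else 0)"

definition Dstar :: "nat \<Rightarrow> nat \<Rightarrow> ((nat \<rightharpoonup> 'y) \<Rightarrow> real) \<Rightarrow> ((nat \<rightharpoonup> 'y) \<Rightarrow> real)" where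
  "Dstar n k F = (\<lambda>\<theta>. if \<theta> \<in> Theta n k then (\<Sum>\<phi>\<in>{\<phi>\<in>Theta n (k - 1). \<phi> \<subseteq>\<^sub>m \<theta>}. F \<phi>) else 0)"

text \<open>A type (b_0,...,b_m) is represented by b :: nat => nat, only entries 0..m matter.\<close>

definition type_size :: "nat \<Rightarrow> (nat \<Rightarrow> nat) \<Rightarrow> nat" where
  "type_size m b = (\<Sum>i\<in>{0..m}. b i)"

definition type_ell :: "nat \<Rightarrow> (nat \<Rightarrow> nat) \<Rightarrow> nat" where
  "type_ell m b = (\<Sum>i\<in>{1..m}. b i)"

text \<open>b' = (b_0 - 1, b_1, ..., b_m); only used when b_0 \<ge> 1.\<close>
definition type_prime :: "(nat \<Rightarrow> nat) \<Rightarrow> (nat \<Rightarrow> nat)" where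
  "type_prime b = b(0 := b 0 - 1)"

definition fspan :: "('a \<Rightarrow> real) set \<Rightarrow> ('a \<Rightarrow> real) set" where
  "fspan G = {f. \<exists>S c. finite S \<and> S \<subseteq> G \<and> f = (\<lambda>x. \<Sum>g\<in>S. c g * g x)}"

text \<open>Fundamental functions of type b on the set A \<subseteq> X, with eigenspaces W_i = eigenspace q (lam i).\<close>
definition fundamental ::
  "nat \<Rightarrow> ('y::finite \<Rightarrow> 'y \<Rightarrow> real) \<Rightarrow> nat \<Rightarrow> (nat \<Rightarrow> real) \<Rightarrow> (nat \<Rightarrow> nat) \<Rightarrow> nat set
    \<Rightarrow> ((nat \<rightharpoonup> 'y) \<Rightarrow> real) \<Rightarrow> bool" where
  "fundamental n q m lam b A F \<longleftrightarrow>
     A \<subseteq> {1..n} \<and> card A = type_size m b \<and>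
     (\<exists>(Fj :: nat \<Rightarrow> 'y \<Rightarrow> real) (ij :: nat \<Rightarrow> nat).
        (\<forall>j\<in>A. ij j \<le> m \<and> Fj j \<in> eigenspace q (lam (ij j))) \<and>
        (\<forall>i\<le>m. card {j\<in>A. ij j = i} = b i) \<and>
        F = (\<lambda>\<theta>. if dom \<theta> = A then (\<Prod>j\<in>A. Fj j (the (\<theta> j))) else 0))"

definition P_kbA ::
  "nat \<Rightarrow> ('y::finite \<Rightarrow> 'y \<Rightarrow> real) \<Rightarrow> nat \<Rightarrow> (nat \<Rightarrow> real) \<Rightarrow> nat \<Rightarrow> (nat \<Rightarrow> nat) \<Rightarrow> nat set
    \<Rightarrow> ((nat \<rightharpoonup> 'y) \<Rightarrow> real) set" where
  "P_kbA n q m lam k b A = fspan {F. card A = k \<and> fundamental n q m lam b A F}"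

definition P_kb ::
  "nat \<Rightarrow> ('y::finite \<Rightarrow> 'y \<Rightarrow> real) \<Rightarrow> nat \<Rightarrow> (nat \<Rightarrow> real) \<Rightarrow> nat \<Rightarrow> (nat \<Rightarrow> nat)
    \<Rightarrow> ((nat \<rightharpoonup> 'y) \<Rightarrow> real) set" where
  "P_kb n q m lam k b = fspan (\<Union>A\<in>{A. A \<subseteq> {1..n} \<and> card A = k}. P_kbA n q m lam k b A)"

text \<open>P_{h,b,k}: for h = k (and |b| = k) the kernel of D_{k,b}; for k < h (|b| = h, ell(b) \<le> k)
  the image D^*_{h,b}(P_{h-1,b',k}). Outside these cases the value is irrelevant (set to {0}).\<close>
fun P_hbk ::
  "nat \<Rightarrow> ('y::finite \<Rightarrow> 'y \<Rightarrow> real) \<Rightarrow> nat \<Rightarrow> (nat \<Rightarrow> real) \<Rightarrow> nat \<Rightarrow> (nat \<Rightarrow> nat) \<Rightarrow> nat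
    \<Rightarrow> ((nat \<rightharpoonup> 'y) \<Rightarrow> real) set" where
  "P_hbk n q m lam 0 b k =
     (if k = 0 \<and> type_size m b = 0
      then {F\<in>P_kb n q m lam 0 b. Dop n 0 F = (\<lambda>_. 0)} else {\<lambda>_. 0})"
| "P_hbk n q m lam (Suc h) b k =
     (if k = Suc h \<and> type_size m b = k
      then {F\<in>P_kb n q m lam k b. Dop n k F = (\<lambda>_. 0)}
      else if k < Suc h \<and> type_size m b = Suc h \<and> type_ell m b \<le> k
      then Dstar n (Suc h) ` P_hbk n q m lam h (type_prime b) k
      else {\<lambda>_. 0})"

end

theory Submission
  imports Defs
begin

text \<open>
  Let M resample one coordinate: M F \<theta> = \<Sum>(j \<in> dom \<theta>) \<Sum>(y \<in> Y) F(\<theta>(j \<mapsto> y)).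
  Counting the ways of adding and removing one coordinate gives, for F supported on \<Theta>_h,
  D_(h+1) D*_(h+1) F = |Y|(n - h) F + D*_h D_h F - M F, and M D* = D* M + |Y| D*.
  Summing an eigenfunction of Q over Y gives |Y| times its (constant) value on W_0 and 0 on the
  other eigenspaces, so M acts on P_(h,b) as |Y| b_0, and by the second identity on P_(h,a',k)
  as |Y|(h - \<ell>(a)). Induction on h - k, starting from D_k F = 0 on P_(k,a',k), now yields the
  eigenvalue of D_(h+1) D*_(h+1) on P_(h,a',k).
\<close>

section \<open>Adding and removing one coordinate\<close>

lemma finite_dom_Theta: "\<theta> \<in> Theta n k \<Longrightarrow> finite (dom \<theta>)"
  unfolding Theta_def by (auto intro: finite_subset)

lemma Theta_dom_cong: "dom \<theta>' = dom \<theta> \<Longrightarrow> \<theta>' \<in> Theta n k \<longleftrightarrow> \<theta> \<in> Theta n k"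
  by (simp add: Theta_def)

lemma map_le_dom_diff_singleton:
  assumes "\<psi> \<subseteq>\<^sub>m \<theta>" "dom \<theta> - dom \<psi> = {x}"
  shows "\<theta> = \<psi>(x \<mapsto> the (\<theta> x))" and "\<psi> = \<theta>(x := None)"
proof -
  have x: "x \<in> dom \<theta>" "x \<notin> dom \<psi>" using assms(2) by blast+
  have "\<psi> z = \<theta> z" if "z \<noteq> x" for z
    using assms that unfolding map_le_def by (metis DiffI domIff singletonD)
  then show "\<theta> = \<psi>(x \<mapsto> the (\<theta> x))" and "\<psi> = \<theta>(x := None)"
    using x by (auto simp: fun_eq_iff)
qed

lemma Theta_map_le_SucE:
  assumes "\<psi> \<in> Theta n h" "\<theta> \<in> Theta n (Suc h)" "\<psi> \<subseteq>\<^sub>m \<theta>"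
  obtains x where "dom \<theta> - dom \<psi> = {x}" "x \<in> {1..n}"
proof -
  have sub: "dom \<psi> \<subseteq> dom \<theta>" using assms(3) by (rule map_le_implies_dom_le)
  have "card (dom \<theta> - dom \<psi>) = 1"
    using card_Diff_subset[OF finite_subset[OF sub] sub] assms(1,2) finite_dom_Theta[OF assms(2)]
    by (simp add: Theta_def)
  then obtain x where "dom \<theta> - dom \<psi> = {x}" by (auto simp: card_Suc_eq)
  moreover have "x \<in> {1..n}"
    using calculation assms(2) unfolding Theta_def by blast
  ultimately show thesis by (rule that)
qed

lemma Theta_extensions:
  assumes "\<phi> \<in> Theta n h"
  shows "{\<theta>\<in>Theta n (Suc h). \<phi> \<subseteq>\<^sub>m \<theta>} = (\<lambda>(x, y). \<phi>(x \<mapsto> y)) ` (({1..n} - dom \<phi>) \<times> UNIV)"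
proof (intro equalityI subsetI)
  fix \<theta> assume "\<theta> \<in> {\<theta>\<in>Theta n (Suc h). \<phi> \<subseteq>\<^sub>m \<theta>}"
  then have \<theta>: "\<theta> \<in> Theta n (Suc h)" "\<phi> \<subseteq>\<^sub>m \<theta>" by auto
  obtain x where x: "dom \<theta> - dom \<phi> = {x}" "x \<in> {1..n}"
    using Theta_map_le_SucE[OF assms \<theta>] .
  show "\<theta> \<in> (\<lambda>(x, y). \<phi>(x \<mapsto> y)) ` (({1..n} - dom \<phi>) \<times> UNIV)"
    using map_le_dom_diff_singleton(1)[OF \<theta>(2) x(1)] x
    by (intro image_eqI[of _ _ "(x, the (\<theta> x))"]) auto
next
  fix \<theta> assume "\<theta> \<in> (\<lambda>(x, y). \<phi>(x \<mapsto> y)) ` (({1..n} - dom \<phi>) \<times> UNIV)"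
  then obtain p where p: "p \<in> ({1..n} - dom \<phi>) \<times> UNIV" "\<theta> = (\<lambda>(x, y). \<phi>(x \<mapsto> y)) p" ..
  then obtain x y where x: "x \<in> {1..n}" "x \<notin> dom \<phi>" and \<theta>: "\<theta> = \<phi>(x \<mapsto> y)"
    by (cases p) auto
  have "card (insert x (dom \<phi>)) = Suc h"
    using assms x(2) finite_dom_Theta[OF assms] by (simp add: Theta_def)
  then show "\<theta> \<in> {\<theta>\<in>Theta n (Suc h). \<phi> \<subseteq>\<^sub>m \<theta>}"
    using assms x \<theta> by (auto simp: Theta_def map_le_def)
qed

lemma inj_on_extend: "inj_on (\<lambda>(x, y). \<phi>(x \<mapsto> y)) ((- dom \<phi>) \<times> UNIV)"
proof (rule inj_onI)
  fix p p' assume "p \<in> (- dom \<phi>) \<times> UNIV" "p' \<in> (- dom \<phi>) \<times> UNIV"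
    and eq: "(\<lambda>(x, y). \<phi>(x \<mapsto> y)) p = (\<lambda>(x, y). \<phi>(x \<mapsto> y)) p'"
  moreover obtain x y x' y' where "p = (x, y)" "p' = (x', y')" by (cases p, cases p') auto
  moreover have "Some y = (\<phi>(x' \<mapsto> y')) x" using fun_cong[OF eq, of x] calculation by simp
  ultimately show "p = p'" by (cases "x = x'") auto
qed

lemma Theta_restrictions:
  assumes "\<theta> \<in> Theta n (Suc h)"
  shows "{\<psi>\<in>Theta n h. \<psi> \<subseteq>\<^sub>m \<theta>} = (\<lambda>i. \<theta>(i := None)) ` dom \<theta>"
proof (intro equalityI subsetI)
  fix \<psi> assume "\<psi> \<in> {\<psi>\<in>Theta n h. \<psi> \<subseteq>\<^sub>m \<theta>}"
  then have \<psi>: "\<psi> \<in> Theta n h" "\<psi> \<subseteq>\<^sub>m \<theta>" by auto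
  obtain i where "dom \<theta> - dom \<psi> = {i}"
    using Theta_map_le_SucE[OF \<psi>(1) assms \<psi>(2)] .
  then show "\<psi> \<in> (\<lambda>i. \<theta>(i := None)) ` dom \<theta>"
    using map_le_dom_diff_singleton(2)[OF \<psi>(2)] by blast
next
  fix \<psi> assume "\<psi> \<in> (\<lambda>i. \<theta>(i := None)) ` dom \<theta>"
  then obtain i where "i \<in> dom \<theta>" "\<psi> = \<theta>(i := None)" by blast
  then show "\<psi> \<in> {\<psi>\<in>Theta n h. \<psi> \<subseteq>\<^sub>m \<theta>}"
    using assms finite_dom_Theta[OF assms] by (auto simp: Theta_def map_le_def)
qed

lemma inj_on_restrict: "inj_on (\<lambda>i. \<theta>(i := None)) (dom \<theta>)"
  by (rule inj_onI) (metis domD fun_upd_apply option.distinct(1))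

lemma extend_in_Theta:
  assumes "\<phi> \<in> Theta n h" "x \<in> {1..n} - dom \<phi>"
  shows "\<phi>(x \<mapsto> y) \<in> Theta n (Suc h)"
proof -
  have "\<phi>(x \<mapsto> y) \<in> (\<lambda>(x, y). \<phi>(x \<mapsto> y)) ` (({1..n} - dom \<phi>) \<times> UNIV)"
    using assms(2) by (intro image_eqI[of _ _ "(x, y)"]) auto
  then show ?thesis unfolding Theta_extensions[OF assms(1), symmetric] by blast
qed

lemma restrict_in_Theta:
  assumes "\<theta> \<in> Theta n (Suc h)" "i \<in> dom \<theta>"
  shows "\<theta>(i := None) \<in> Theta n h"
  using Theta_restrictions[OF assms(1)] assms(2) by blast

lemma Dstar_Suc_eq:
  assumes "\<theta> \<in> Theta n (Suc h)"
  shows "Dstar n (Suc h) F \<theta> = (\<Sum>i\<in>dom \<theta>. F (\<theta>(i := None)))"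
  using assms unfolding Dstar_def
  by (simp add: Theta_restrictions[OF assms] sum.reindex[OF inj_on_restrict])

lemma Dop_Suc_eq:
  assumes "\<phi> \<in> Theta n h"
  shows "Dop n (Suc h) G \<phi> = (\<Sum>x\<in>{1..n} - dom \<phi>. \<Sum>y\<in>UNIV. G (\<phi>(x \<mapsto> y)))"
proof -
  have inj: "inj_on (\<lambda>(x, y). \<phi>(x \<mapsto> y)) (({1..n} - dom \<phi>) \<times> UNIV)"
    by (rule inj_on_subset[OF inj_on_extend]) auto
  have "Dop n (Suc h) G \<phi> = sum G ((\<lambda>(x, y). \<phi>(x \<mapsto> y)) ` (({1..n} - dom \<phi>) \<times> UNIV))"
    using assms unfolding Dop_def by (simp add: Theta_extensions[OF assms])
  also have "\<dots> = (\<Sum>p\<in>({1..n} - dom \<phi>) \<times> UNIV. G ((\<lambda>(x, y). \<phi>(x \<mapsto> y)) p))"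
    by (rule sum.reindex[OF inj, unfolded comp_def])
  also have "\<dots> = (\<Sum>x\<in>{1..n} - dom \<phi>. \<Sum>y\<in>UNIV. G (\<phi>(x \<mapsto> y)))"
    by (simp add: sum.cartesian_product case_prod_beta)
  finally show ?thesis .
qed

lemma Dstar_Suc_upd:
  assumes "\<phi>(x \<mapsto> y) \<in> Theta n (Suc h)"
  shows "Dstar n (Suc h) F (\<phi>(x \<mapsto> y))
    = F (\<phi>(x := None)) + (\<Sum>i\<in>dom \<phi> - {x}. F ((\<phi>(i := None))(x \<mapsto> y)))"
proof -
  have fin: "finite (insert x (dom \<phi>))" using finite_dom_Theta[OF assms] by simp
  have "Dstar n (Suc h) F (\<phi>(x \<mapsto> y)) = (\<Sum>i\<in>insert x (dom \<phi>). F ((\<phi>(x \<mapsto> y))(i := None)))"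
    using Dstar_Suc_eq[OF assms] by simp
  also have "\<dots> = F (\<phi>(x := None)) + (\<Sum>i\<in>dom \<phi> - {x}. F ((\<phi>(x \<mapsto> y))(i := None)))"
    using sum.remove[OF fin insertI1, of "\<lambda>i. F ((\<phi>(x \<mapsto> y))(i := None))"] by simp
  also have "(\<Sum>i\<in>dom \<phi> - {x}. F ((\<phi>(x \<mapsto> y))(i := None)))
      = (\<Sum>i\<in>dom \<phi> - {x}. F ((\<phi>(i := None))(x \<mapsto> y)))"
    by (intro sum.cong refl) (metis fun_upd_twist DiffD2 singletonI)
  finally show ?thesis .
qed

section \<open>Commutation relations for \<open>D\<close> and \<open>D\<^sup>*\<close>\<close>

definition L_Theta :: "nat \<Rightarrow> nat \<Rightarrow> ((nat \<rightharpoonup> 'y) \<Rightarrow> real) set" where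
  "L_Theta n h = {F. \<forall>\<theta>. \<theta> \<notin> Theta n h \<longrightarrow> F \<theta> = 0}"

definition resample_sum :: "((nat \<rightharpoonup> 'y::finite) \<Rightarrow> real) \<Rightarrow> (nat \<rightharpoonup> 'y) \<Rightarrow> real" where
  "resample_sum F \<theta> = (\<Sum>j\<in>dom \<theta>. \<Sum>y\<in>UNIV. F (\<theta>(j \<mapsto> y)))"

definition exchange_sum :: "nat \<Rightarrow> ((nat \<rightharpoonup> 'y::finite) \<Rightarrow> real) \<Rightarrow> (nat \<rightharpoonup> 'y) \<Rightarrow> real" where
  "exchange_sum n F \<phi> = (\<Sum>i\<in>dom \<phi>. \<Sum>x\<in>{1..n} - dom \<phi>. \<Sum>y\<in>UNIV. F ((\<phi>(i := None))(x \<mapsto> y)))"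

lemma Dstar_in_L_Theta: "Dstar n k F \<in> L_Theta n k"
  by (simp add: L_Theta_def Dstar_def)

lemma Dstar_scale: "Dstar n k (\<lambda>\<theta>. c * G \<theta>) = (\<lambda>\<theta>. c * Dstar n k G \<theta>)"
  by (simp add: Dstar_def sum_distrib_left fun_eq_iff)

lemma resample_sum_outside:
  assumes "F \<in> L_Theta n h" "\<theta> \<notin> Theta n h"
  shows "resample_sum F \<theta> = 0"
proof -
  have "F (\<theta>(j \<mapsto> y)) = 0" if "j \<in> dom \<theta>" for j y
    using assms that Theta_dom_cong[of "\<theta>(j \<mapsto> y)" \<theta>] by (auto simp: L_Theta_def)
  then show ?thesis by (simp add: resample_sum_def)
qed

lemma resample_sum_add: "resample_sum (\<lambda>\<theta>. F \<theta> + G \<theta>) \<theta> = resample_sum F \<theta> + resample_sum G \<theta>"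
  by (simp add: resample_sum_def sum.distrib)

lemma resample_sum_scale: "resample_sum (\<lambda>\<theta>. c * F \<theta>) \<theta> = c * resample_sum F \<theta>"
  by (simp add: resample_sum_def sum_distrib_left)

lemma Dop_Dstar_Suc_eq:
  fixes F :: "(nat \<rightharpoonup> 'y::finite) \<Rightarrow> real"
  assumes \<phi>: "\<phi> \<in> Theta n h"
  shows "Dop n (Suc h) (Dstar n (Suc h) F) \<phi>
     = real (card ({1..n} - dom \<phi>)) * card (UNIV :: 'y set) * F \<phi> + exchange_sum n F \<phi>"
proof -
  let ?S = "{1..n} - dom \<phi>"
  have "Dstar n (Suc h) F (\<phi>(x \<mapsto> y)) = F \<phi> + (\<Sum>i\<in>dom \<phi>. F ((\<phi>(i := None))(x \<mapsto> y)))"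
    if x: "x \<in> ?S" for x y
    using Dstar_Suc_upd[OF extend_in_Theta[OF \<phi> x], of F] x by (simp add: map_upd_triv)
  then have "Dop n (Suc h) (Dstar n (Suc h) F) \<phi> = (\<Sum>x\<in>?S. \<Sum>y\<in>(UNIV::'y set). F \<phi>)
      + (\<Sum>x\<in>?S. \<Sum>y\<in>UNIV. \<Sum>i\<in>dom \<phi>. F ((\<phi>(i := None))(x \<mapsto> y)))"
    by (simp add: Dop_Suc_eq[OF \<phi>] sum.distrib)
  also have "(\<Sum>x\<in>?S. \<Sum>y\<in>UNIV. \<Sum>i\<in>dom \<phi>. F ((\<phi>(i := None))(x \<mapsto> y))) = exchange_sum n F \<phi>"
    unfolding exchange_sum_def by (subst sum.swap) (subst (2) sum.swap, rule refl)
  finally show ?thesis by simp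
qed

lemma Dstar_Dop_eq:
  fixes F :: "(nat \<rightharpoonup> 'y::finite) \<Rightarrow> real"
  assumes \<phi>: "\<phi> \<in> Theta n h"
  shows "Dstar n h (Dop n h F) \<phi> = resample_sum F \<phi> + exchange_sum n F \<phi>"
proof (cases h)
  case 0
  then have "dom \<phi> = {}" using \<phi> finite_dom_Theta[OF \<phi>] by (simp add: Theta_def)
  then show ?thesis using 0 by (simp add: Dstar_def Dop_def resample_sum_def exchange_sum_def)
next
  case (Suc h')
  let ?S = "{1..n} - dom \<phi>"
  have \<phi>': "\<phi> \<in> Theta n (Suc h')" using \<phi> Suc by simp
  have extend_restriction: "Dop n (Suc h') F (\<phi>(i := None))
      = (\<Sum>y\<in>UNIV. F (\<phi>(i \<mapsto> y))) + (\<Sum>x\<in>?S. \<Sum>y\<in>UNIV. F ((\<phi>(i := None))(x \<mapsto> y)))"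
    if i: "i \<in> dom \<phi>" for i
  proof -
    have "{1..n} - dom (\<phi>(i := None)) = insert i ?S" "i \<notin> ?S"
      using i \<phi> by (auto simp: Theta_def)
    then show ?thesis
      using Dop_Suc_eq[OF restrict_in_Theta[OF \<phi>' i], of F] by simp
  qed
  have "Dstar n h (Dop n h F) \<phi> = (\<Sum>i\<in>dom \<phi>. Dop n (Suc h') F (\<phi>(i := None)))"
    using Dstar_Suc_eq[OF \<phi>'] Suc by simp
  also have "\<dots> = resample_sum F \<phi> + exchange_sum n F \<phi>"
    by (simp add: extend_restriction sum.distrib resample_sum_def exchange_sum_def)
  finally show ?thesis .
qed

lemma Dop_Dstar_commutator:
  fixes F :: "(nat \<rightharpoonup> 'y::finite) \<Rightarrow> real"
  assumes F: "F \<in> L_Theta n h" and "h \<le> n"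
  shows "Dop n (Suc h) (Dstar n (Suc h) F) \<theta>
     = card (UNIV :: 'y set) * (real n - real h) * F \<theta> + Dstar n h (Dop n h F) \<theta> - resample_sum F \<theta>"
proof (cases "\<theta> \<in> Theta n h")
  case False
  then show ?thesis
    using F resample_sum_outside[OF F False] by (simp add: Dop_def Dstar_def L_Theta_def)
next
  case True
  have sub: "dom \<theta> \<subseteq> {1..n}" and "card (dom \<theta>) = h" using True by (auto simp: Theta_def)
  then have "card ({1..n} - dom \<theta>) = n - h"
    using card_Diff_subset[OF finite_subset[OF sub finite_atLeastAtMost] sub] by simp
  then have "real (card ({1..n} - dom \<theta>)) = real n - real h"
    using \<open>h \<le> n\<close> by (simp add: of_nat_diff)
  then show ?thesis
    using Dop_Dstar_Suc_eq[OF True, of F] Dstar_Dop_eq[OF True, of F] by simp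
qed

lemma Dop_Dstar_eigenvector:
  fixes F :: "(nat \<rightharpoonup> 'y::finite) \<Rightarrow> real"
  assumes "F \<in> L_Theta n h" "h \<le> n"
    and "resample_sum F = (\<lambda>\<theta>. r * F \<theta>)" "Dstar n h (Dop n h F) = (\<lambda>\<theta>. e * F \<theta>)"
  shows "Dop n (Suc h) (Dstar n (Suc h) F)
    = (\<lambda>\<theta>. (card (UNIV :: 'y set) * (real n - real h) + e - r) * F \<theta>)"
  using Dop_Dstar_commutator[OF assms(1,2)] assms(3,4) by (simp add: fun_eq_iff algebra_simps)

lemma resample_sum_Dstar:
  fixes G :: "(nat \<rightharpoonup> 'y::finite) \<Rightarrow> real"
  shows "resample_sum (Dstar n (Suc h) G) \<theta>
     = Dstar n (Suc h) (resample_sum G) \<theta> + card (UNIV :: 'y set) * Dstar n (Suc h) G \<theta>"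
proof (cases "\<theta> \<in> Theta n (Suc h)")
  case False
  then show ?thesis
    using resample_sum_outside[OF Dstar_in_L_Theta False] by (simp add: Dstar_def)
next
  case True
  let ?D = "dom \<theta>"
  have fin: "finite ?D" using finite_dom_Theta[OF True] .
  have "Dstar n (Suc h) G (\<theta>(j \<mapsto> y))
      = G (\<theta>(j := None)) + (\<Sum>i\<in>?D - {j}. G ((\<theta>(i := None))(j \<mapsto> y)))"
    if j: "j \<in> ?D" for j y
    using j True Theta_dom_cong[of "\<theta>(j \<mapsto> y)" \<theta>] by (intro Dstar_Suc_upd) auto
  then have "resample_sum (Dstar n (Suc h) G) \<theta> = (\<Sum>j\<in>?D. card (UNIV :: 'y set) * G (\<theta>(j := None)))
      + (\<Sum>j\<in>?D. \<Sum>i\<in>?D - {j}. \<Sum>y\<in>UNIV. G ((\<theta>(i := None))(j \<mapsto> y)))"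
    by (simp add: resample_sum_def sum.distrib sum.swap[of _ "?D - {_}"])
  also have "(\<Sum>j\<in>?D. \<Sum>i\<in>?D - {j}. \<Sum>y\<in>UNIV. G ((\<theta>(i := None))(j \<mapsto> y)))
      = (\<Sum>i\<in>?D. \<Sum>j\<in>{j\<in>?D. j \<noteq> i}. \<Sum>y\<in>UNIV. G ((\<theta>(i := None))(j \<mapsto> y)))"
    using sum.swap_restrict[OF fin fin, of "\<lambda>j i. \<Sum>y\<in>UNIV. G ((\<theta>(i := None))(j \<mapsto> y))" "(\<noteq>)"]
    by (simp add: set_diff_eq eq_commute)
  also have "\<dots> = Dstar n (Suc h) (resample_sum G) \<theta>"
    using Dstar_Suc_eq[OF True] by (simp add: resample_sum_def set_diff_eq)
  finally show ?thesis
    using Dstar_Suc_eq[OF True] by (simp add: sum_distrib_left fun_upd_def)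
qed

section \<open>Fundamental functions\<close>

lemma fspan_subset:
  assumes "G \<subseteq> V" "(\<lambda>_. 0) \<in> V"
    and "\<And>f g. f \<in> V \<Longrightarrow> g \<in> V \<Longrightarrow> (\<lambda>x. f x + g x) \<in> V"
    and "\<And>c f. f \<in> V \<Longrightarrow> (\<lambda>x. c * f x) \<in> V"
  shows "fspan G \<subseteq> V"
proof
  fix f assume "f \<in> fspan G"
  then obtain S c where S: "finite S" "S \<subseteq> G" and f: "f = (\<lambda>x. \<Sum>g\<in>S. c g * g x)"
    unfolding fspan_def by blast
  have "(\<lambda>x. \<Sum>g\<in>S. c g * g x) \<in> V" using S
  proof (induction S rule: finite_induct)
    case empty
    then show ?case using assms(2) by simp
  next
    case (insert g S)
    then have "(\<lambda>x. c g * g x + (\<Sum>g\<in>S. c g * g x)) \<in> V" using assms by blast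
    then show ?case using insert.hyps by simp
  qed
  then show "f \<in> V" using f by simp
qed

lemma Qop_fixed_point_constant:
  fixes q :: "'y::finite \<Rightarrow> 'y \<Rightarrow> real"
  assumes stoch: "stochastic_matrix q" and irred: "irreducible_matrix q" and fixed: "Qop q f = f"
  shows "f y = f y'"
proof -
  define M where "M = Max (range f)"
  obtain y0 where y0: "f y0 = M" unfolding M_def by (metis Max_in finite_UNIV finite_imageI imageE rangeI empty_iff)
  have le_M: "f z \<le> M" for z unfolding M_def by simp
  have "f b = M" if "(y0, b) \<in> {(a, b). 0 < q a b}\<^sup>*" for b
    using that
  proof (induction rule: rtrancl_induct)
    case base
    then show ?case using y0 .
  next
    case (step a b)
    have nonneg: "0 \<le> q a y'" for y' using stoch by (simp add: stochastic_matrix_def)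
    have "(\<Sum>y'\<in>UNIV. q a y' * (M - f y')) = M * (\<Sum>y'\<in>UNIV. q a y') - Qop q f a"
      by (simp add: Qop_def algebra_simps sum_subtractf sum_distrib_left)
    also have "\<dots> = 0" using stoch fixed step.IH by (simp add: stochastic_matrix_def)
    finally have "q a b * (M - f b) = 0"
      using sum_nonneg_eq_0_iff[of UNIV "\<lambda>y'. q a y' * (M - f y')"] nonneg le_M by simp
    then show ?case using step.hyps(2) by simp
  qed
  then show ?thesis using irred unfolding irreducible_matrix_def by metis
qed

lemma eigenvector_sum_zero:
  fixes q :: "'y::finite \<Rightarrow> 'y \<Rightarrow> real"
  assumes sym: "symmetric_matrix q" and stoch: "stochastic_matrix q"
    and eig: "Qop q f = (\<lambda>y. \<mu> * f y)" and "\<mu> \<noteq> 1"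
  shows "(\<Sum>y\<in>UNIV. f y) = 0"
proof -
  have "\<mu> * (\<Sum>y\<in>UNIV. f y) = (\<Sum>y\<in>UNIV. \<Sum>y'\<in>UNIV. q y y' * f y')"
    using eig by (simp add: Qop_def fun_eq_iff sum_distrib_left)
  also have "\<dots> = (\<Sum>y'\<in>UNIV. f y' * (\<Sum>y\<in>UNIV. q y' y))"
    using sym by (subst sum.swap) (simp add: symmetric_matrix_def sum_distrib_left mult.commute)
  also have "\<dots> = (\<Sum>y\<in>UNIV. f y)" using stoch by (simp add: stochastic_matrix_def)
  finally show ?thesis using \<open>\<mu> \<noteq> 1\<close> by (metis mult_cancel_right1 mult.commute)
qed

lemma fundamental_in_L_Theta:
  assumes "fundamental n q m lam b A F"
  shows "F \<in> L_Theta n (type_size m b)"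
proof -
  obtain Fj where F: "F = (\<lambda>\<theta>. if dom \<theta> = A then \<Prod>j\<in>A. Fj j (the (\<theta> j)) else 0)"
    using assms unfolding fundamental_def by blast
  have "A \<in> {D. D \<subseteq> {1..n} \<and> card D = type_size m b}"
    using assms by (simp add: fundamental_def)
  then have "dom \<theta> \<noteq> A" if "\<theta> \<notin> Theta n (type_size m b)" for \<theta>
    using that by (auto simp: Theta_def)
  then show ?thesis unfolding L_Theta_def F by auto
qed

section \<open>The spaces \<open>P\<^sub>h\<^sub>,\<^sub>b\<^sub>,\<^sub>k\<close>\<close>

lemma type_size_eq: "type_size m a = a 0 + type_ell m a"
  by (simp add: type_size_def type_ell_def sum.atLeast_Suc_atMost)

lemma type_ell_prime [simp]: "type_ell m (type_prime a) = type_ell m a"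
  by (simp add: type_ell_def type_prime_def)

lemma type_prime_0 [simp]: "type_prime a 0 = a 0 - 1"
  by (simp add: type_prime_def)

lemma type_size_prime:
  "type_ell m a < type_size m a \<Longrightarrow> type_size m (type_prime a) = type_size m a - 1"
  using type_size_eq[of m a] type_size_eq[of m "type_prime a"] by simp

lemma P_hbk_diagonalD:
  assumes "type_size m a = Suc h" "type_ell m a \<le> h" "F \<in> P_hbk n q m lam h (type_prime a) h"
  shows "F \<in> P_kb n q m lam h (type_prime a)" and "Dop n h F = (\<lambda>_. 0)"
proof -
  have "type_size m (type_prime a) = h" using type_size_prime[of m a] assms(1,2) by simp
  then have "P_hbk n q m lam h (type_prime a) h = {F \<in> P_kb n q m lam h (type_prime a). Dop n h F = (\<lambda>_. 0)}"
    by (cases h) simp_all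
  then show "F \<in> P_kb n q m lam h (type_prime a)" and "Dop n h F = (\<lambda>_. 0)"
    using assms(3) by simp_all
qed

lemma P_hbk_SucE:
  assumes "k \<le> h" "type_size m a = Suc (Suc h)" "type_ell m a \<le> k"
    and "F \<in> P_hbk n q m lam (Suc h) (type_prime a) k"
  obtains G where "G \<in> P_hbk n q m lam h (type_prime (type_prime a)) k" and "F = Dstar n (Suc h) G"
proof -
  have "type_size m (type_prime a) = Suc h" using type_size_prime[of m a] assms(1-3) by simp
  then show ?thesis using assms(1,3,4) that by auto
qed

context
  fixes q :: "'y::finite \<Rightarrow> 'y \<Rightarrow> real" and lam :: "nat \<Rightarrow> real" and m :: nat
  assumes sym: "symmetric_matrix q" and stoch: "stochastic_matrix q" and irred: "irreducible_matrix q"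
    and lam0: "lam 0 = 1" and inj_lam: "inj_on lam {0..m}"
begin

lemma sum_eigenspace:
  assumes "i \<le> m" "f \<in> eigenspace q (lam i)"
  shows "(\<Sum>y\<in>UNIV. f y) = (if i = 0 then real (card (UNIV :: 'y set)) * f z else 0)"
proof (cases "i = 0")
  case True
  then have "Qop q f = f" using assms(2) lam0 by (simp add: eigenspace_def)
  then have "(\<Sum>y\<in>UNIV. f y) = (\<Sum>y\<in>(UNIV :: 'y set). f z)"
    using Qop_fixed_point_constant[OF stoch irred] by (intro sum.cong) blast+
  then show ?thesis using True by simp
next
  case False
  then have "lam i \<noteq> 1" using inj_onD[OF inj_lam, of i 0] assms(1) lam0 by auto
  then show ?thesis
    using eigenvector_sum_zero[OF sym stoch] assms(2) False by (simp add: eigenspace_def)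
qed

lemma resample_sum_fundamental:
  assumes "fundamental n q m lam b A F"
  shows "resample_sum F \<theta> = real (card (UNIV :: 'y set)) * real (b 0) * F \<theta>"
proof -
  let ?c = "real (card (UNIV :: 'y set))"
  obtain Fj ij where A: "A \<subseteq> {1..n}"
    and eig: "\<forall>j\<in>A. ij j \<le> m \<and> Fj j \<in> eigenspace q (lam (ij j))"
    and count: "card {j\<in>A. ij j = 0} = b 0"
    and F: "F = (\<lambda>\<theta>. if dom \<theta> = A then (\<Prod>j\<in>A. Fj j (the (\<theta> j))) else 0)"
    using assms unfolding fundamental_def by blast
  have finA: "finite A" using A by (rule finite_subset) simp
  show ?thesis
  proof (cases "dom \<theta> = A")
    case False
    then have "F (\<theta>(j \<mapsto> y)) = 0" if "j \<in> dom \<theta>" for j y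
      using that by (simp add: F insert_absorb)
    then show ?thesis using False by (simp add: resample_sum_def F)
  next
    case True
    have resample_coordinate: "(\<Sum>y\<in>UNIV. F (\<theta>(j \<mapsto> y))) = (if ij j = 0 then ?c * F \<theta> else 0)"
      if j: "j \<in> A" for j
    proof -
      let ?rest = "\<Prod>i\<in>A - {j}. Fj i (the (\<theta> i))"
      have factor: "F (\<theta>(j \<mapsto> y)) = Fj j y * ?rest" for y
      proof -
        have "F (\<theta>(j \<mapsto> y)) = (\<Prod>i\<in>A. Fj i (the ((\<theta>(j \<mapsto> y)) i)))"
          using True j by (simp add: F insert_absorb)
        also have "\<dots> = Fj j y * (\<Prod>i\<in>A - {j}. Fj i (the ((\<theta>(j \<mapsto> y)) i)))"
          by (subst prod.remove[OF finA j]) simp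
        also have "(\<Prod>i\<in>A - {j}. Fj i (the ((\<theta>(j \<mapsto> y)) i))) = ?rest"
          by (rule prod.cong) auto
        finally show ?thesis .
      qed
      have "F \<theta> = Fj j (the (\<theta> j)) * ?rest"
        using True prod.remove[OF finA j, of "\<lambda>i. Fj i (the (\<theta> i))"] by (simp add: F)
      then show ?thesis
        using sum_eigenspace[of "ij j" "Fj j" "the (\<theta> j)"] eig j
        by (simp add: factor flip: sum_distrib_right)
    qed
    have "resample_sum F \<theta> = (\<Sum>j\<in>A. if ij j = 0 then ?c * F \<theta> else 0)"
      unfolding resample_sum_def True by (rule sum.cong[OF refl]) (rule resample_coordinate)
    also have "\<dots> = real (card {j\<in>A. ij j = 0}) * (?c * F \<theta>)"
      using finA by (simp add: sum.If_cases Int_def)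
    finally show ?thesis using count by simp
  qed
qed

lemma resample_sum_P_kb:
  assumes "F \<in> P_kb n q m lam h b"
  shows "F \<in> L_Theta n h \<and> resample_sum F = (\<lambda>\<theta>. real (card (UNIV :: 'y set)) * real (b 0) * F \<theta>)"
proof -
  let ?V = "{F \<in> L_Theta n h. resample_sum F = (\<lambda>\<theta>. real (card (UNIV :: 'y set)) * real (b 0) * F \<theta>)}"
  have zero: "(\<lambda>_. 0) \<in> ?V" by (simp add: L_Theta_def resample_sum_def fun_eq_iff)
  have add: "(\<lambda>\<theta>. f \<theta> + g \<theta>) \<in> ?V" if "f \<in> ?V" "g \<in> ?V" for f g :: "(nat \<rightharpoonup> 'y) \<Rightarrow> real"
    using that by (simp add: L_Theta_def resample_sum_add fun_eq_iff algebra_simps)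
  have scale: "(\<lambda>\<theta>. c * f \<theta>) \<in> ?V" if "f \<in> ?V" for c and f :: "(nat \<rightharpoonup> 'y) \<Rightarrow> real"
    using that by (simp add: L_Theta_def resample_sum_scale fun_eq_iff algebra_simps)
  have "P_kbA n q m lam h b A \<subseteq> ?V" for A
    unfolding P_kbA_def
  proof (rule fspan_subset[OF _ zero add scale])
    show "{F. card A = h \<and> fundamental n q m lam b A F} \<subseteq> ?V"
    proof
      fix F assume "F \<in> {F. card A = h \<and> fundamental n q m lam b A F}"
      then have "card A = h" and fund: "fundamental n q m lam b A F" by simp_all
      then have "type_size m b = h" by (simp add: fundamental_def)
      then show "F \<in> ?V"
        using fundamental_in_L_Theta[OF fund] resample_sum_fundamental[OF fund] by auto
    qed
  qed
  then have "P_kb n q m lam h b \<subseteq> ?V"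
    unfolding P_kb_def by (intro fspan_subset[OF _ zero add scale]) blast
  then show ?thesis using assms by blast
qed

lemma P_hbk_resample_sum:
  assumes "k \<le> h" "type_size m a = Suc h" "type_ell m a \<le> k"
    and "F \<in> P_hbk n q m lam h (type_prime a) k"
  shows "F \<in> L_Theta n h
    \<and> resample_sum F = (\<lambda>\<theta>. real (card (UNIV :: 'y set)) * (real h - real (type_ell m a)) * F \<theta>)"
proof -
  obtain d where "h = k + d" using assms(1) le_Suc_ex by blast
  then show ?thesis using assms(2-4)
  proof (induction d arbitrary: h a F)
    case 0
    then have "F \<in> P_kb n q m lam h (type_prime a)"
      using P_hbk_diagonalD(1)[of m a h F n q lam] by simp
    moreover have "real (type_prime a 0) = real h - real (type_ell m a)"
      using 0 type_size_eq[of m a] by simp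
    ultimately show ?case using resample_sum_P_kb by simp
  next
    case (Suc d)
    obtain G where G: "G \<in> P_hbk n q m lam (k + d) (type_prime (type_prime a)) k"
      and F: "F = Dstar n (Suc (k + d)) G"
      using P_hbk_SucE[OF le_add1] Suc.prems by (metis add_Suc_right)
    have "G \<in> L_Theta n (k + d)"
      and resample_G: "resample_sum G = (\<lambda>\<theta>. real (card (UNIV :: 'y set)) * (real (k + d) - real (type_ell m a)) * G \<theta>)"
      using Suc.IH[OF refl _ _ G] Suc.prems type_size_prime[of m a] by auto
    have "Dstar n (Suc (k + d)) (resample_sum G)
        = (\<lambda>\<theta>. real (card (UNIV :: 'y set)) * (real (k + d) - real (type_ell m a)) * F \<theta>)"
      by (simp add: resample_G Dstar_scale F)
    then have "resample_sum F \<theta> = real (card (UNIV :: 'y set)) * (real h - real (type_ell m a)) * F \<theta>" for \<theta>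
      using resample_sum_Dstar[of n "k + d" G \<theta>] Suc.prems(1) by (simp add: F algebra_simps)
    then show ?case using F Dstar_in_L_Theta Suc.prems(1) by auto
  qed
qed

lemma Dop_Dstar_P_hbk:
  assumes "k \<le> h" "h < n" "type_size m a = Suc h" "type_ell m a \<le> k"
    and "F \<in> P_hbk n q m lam h (type_prime a) k"
  shows "Dop n (Suc h) (Dstar n (Suc h) F) = (\<lambda>\<theta>. real (card (UNIV :: 'y set))
    * (real n + real (type_ell m a) - real k - real h) * real (h - k + 1) * F \<theta>)"
proof -
  obtain d where "h = k + d" using assms(1) le_Suc_ex by blast
  then show ?thesis using assms(2-5)
  proof (induction d arbitrary: h a F)
    case 0
    have F: "F \<in> L_Theta n h" and resample_F: "resample_sum F = (\<lambda>\<theta>. real (card (UNIV :: 'y set))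
        * (real h - real (type_ell m a)) * F \<theta>)"
      using P_hbk_resample_sum[of k h a F n] 0 by auto
    have DstarDop_F: "Dstar n h (Dop n h F) = (\<lambda>\<theta>. 0 * F \<theta>)"
      using P_hbk_diagonalD(2)[of m a h F n q lam] 0 by (simp add: Dstar_def fun_eq_iff)
    show ?case
      using Dop_Dstar_eigenvector[OF F _ resample_F DstarDop_F] 0 by (simp add: algebra_simps)
  next
    case (Suc d)
    let ?e = "real (card (UNIV :: 'y set)) * (real n + real (type_ell m a) - real k - real (k + d))
      * real (Suc d)"
    obtain G where G: "G \<in> P_hbk n q m lam (k + d) (type_prime (type_prime a)) k"
      and F: "F = Dstar n (Suc (k + d)) G"
      using P_hbk_SucE[OF le_add1] Suc.prems by (metis add_Suc_right)
    have "Dop n (Suc (k + d)) F = (\<lambda>\<theta>. ?e * G \<theta>)"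
      using Suc.IH[OF refl _ _ _ G] Suc.prems type_size_prime[of m a] by (simp add: F)
    then have DstarDop_F: "Dstar n h (Dop n h F) = (\<lambda>\<theta>. ?e * F \<theta>)"
      using Suc.prems(1) by (simp add: F Dstar_scale)
    have F_L: "F \<in> L_Theta n h" and resample_F: "resample_sum F = (\<lambda>\<theta>. real (card (UNIV :: 'y set))
        * (real h - real (type_ell m a)) * F \<theta>)"
      using P_hbk_resample_sum[of k h a F n] Suc.prems by auto
    show ?case
      using Dop_Dstar_eigenvector[OF F_L _ resample_F DstarDop_F] Suc.prems(1,2)
      by (simp add: algebra_simps)
  qed
qed

end

theorem proposition7p8:
  fixes n m k h :: nat and q :: "'y::finite \<Rightarrow> 'y \<Rightarrow> real"
    and lam :: "nat \<Rightarrow> real" and a :: "nat \<Rightarrow> nat"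
    and F :: "(nat \<rightharpoonup> 'y) \<Rightarrow> real"
  assumes "symmetric_matrix q" and "stochastic_matrix q" and "irreducible_matrix q"
    and "lam 0 = 1" and "inj_on lam {0..m}"
    and "\<forall>\<mu>. is_eigenvalue q \<mu> \<longleftrightarrow> (\<exists>i\<le>m. lam i = \<mu>)"
    and "k \<le> h" and "h \<le> n - 1" and "1 \<le> n"
    and "type_size m a = h + 1" and "type_ell m a \<le> k"
    and "F \<in> P_hbk n q m lam h (type_prime a) k"
  shows "Dop n (h + 1) (Dstar n (h + 1) F)
         = (\<lambda>\<theta>. real (card (UNIV :: 'y set)) * (real n + real (type_ell m a) - real k - real h)
                  * real (h - k + 1) * F \<theta>)"
proof -
  have "h < n" using assms(8,9) by simp
  then show ?thesis
    using Dop_Dstar_P_hbk[OF assms(1-5) assms(7) _ _ assms(11,12)] assms(10) by simp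
qed

end
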